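(* Let $k\ge2$, $\sigma_i=\frac{i(k-i)}2$ for $i=0,\dots,k$, and consider the system for $(b_2,\dots,b_k)$: $$\dot b_i=(b_i+\sigma_{i-1})(b_{i-1}-2b_i+b_{i+1}),\qquad i=2,\dots,k,$$ with the convention $b_1\equiv b_{k+1}\equiv0$. For all $\eta\in(0,\frac15]$ and $A\ge0$, the compact set $K=\prod_{i=2}^k[-\sigma_{i-1}+\eta,A]$ is stable (forward invariant) under the flow of this system. In particular, any solution whose initial data lies in $K$ is global (for forward times). *)

theory Defs
  imports "HOL-Analysis.Analysis"
begin

text \<open>States are functions x :: nat => real; only the coordinates i = 2..k are meaningful.\<close>

definition sigma :: "nat \<Rightarrow> nat \<Rightarrow> real" where
  "sigma k i = real i * (real k - real i) / 2"

definition bext :: "nat \<Rightarrow> (nat \<Rightarrow> real) \<Rightarrow> nat \<Rightarrow> real" where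
  "bext k x i = (if 2 \<le> i \<and> i \<le> k then x i else 0)"

definition rhs :: "nat \<Rightarrow> (nat \<Rightarrow> real) \<Rightarrow> nat \<Rightarrow> real" where
  "rhs k x i = (x i + sigma k (i - 1)) * (bext k x (i - 1) - 2 * x i + bext k x (i + 1))"

definition inK :: "nat \<Rightarrow> real \<Rightarrow> real \<Rightarrow> (nat \<Rightarrow> real) \<Rightarrow> bool" where
  "inK k \<eta> A x \<longleftrightarrow> (\<forall>i\<in>{2..k}. - sigma k (i - 1) + \<eta> \<le> x i \<and> x i \<le> A)"

definition is_solution :: "nat \<Rightarrow> real set \<Rightarrow> (real \<Rightarrow> nat \<Rightarrow> real) \<Rightarrow> bool" where
  "is_solution k I b \<longleftrightarrow>
     (\<forall>t\<in>I. \<forall>i\<in>{2..k}. ((\<lambda>s. b s i) has_real_derivative rhs k (b t) i) (at t within I))"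

end

theory Submission
  imports Defs
begin

text \<open>
  The faces of the box \<open>K\<close> are crossed inwards. The first factor \<open>b\<^sub>i + \<sigma>\<^sub>i\<^sub>-\<^sub>1\<close> is
  nonnegative on \<open>K\<close>. On the face \<open>b\<^sub>i = A\<close> the discrete Laplacian \<open>b\<^sub>i\<^sub>-\<^sub>1 - 2 b\<^sub>i + b\<^sub>i\<^sub>+\<^sub>1\<close>
  is \<open>\<le> 0\<close>; on the face \<open>b\<^sub>i = - \<sigma>\<^sub>i\<^sub>-\<^sub>1 + \<eta>\<close> it is \<open>\<ge> 1 - 2 \<eta> \<ge> 0\<close>, because \<open>\<sigma>\<close> has
  constant second difference \<open>-1\<close> and the convention \<open>b\<^sub>1 = b\<^sub>k\<^sub>+\<^sub>1 = 0\<close> matches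
  \<open>\<sigma>\<^sub>0 = \<sigma>\<^sub>k = 0\<close>. A first-exit-time argument then shows that \<open>K\<close> is forward invariant.

  For global existence the field is composed with the coordinatewise retraction onto \<open>K\<close>.
  The result is bounded and globally Lipschitz, so Picard iteration converges on \<open>[0, \<infinity>)\<close>;
  its solution stays in \<open>K\<close> by invariance, and there the two fields agree.
\<close>

section \<open>Forward invariance of boxes\<close>

lemma negative_until_first_zero:
  fixes g :: "'j \<Rightarrow> real \<Rightarrow> real"
  assumes fin: "finite J"
    and cont: "\<And>j. j \<in> J \<Longrightarrow> continuous_on {0..t0} (g j)"
    and start: "\<And>j. j \<in> J \<Longrightarrow> g j 0 < 0"
    and no_zero: "\<And>s j. s \<in> {0<..t0} \<Longrightarrow> j \<in> J \<Longrightarrow> \<forall>t\<in>{0..<s}. \<forall>j\<in>J. g j t < 0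
                    \<Longrightarrow> \<forall>j\<in>J. g j s \<le> 0 \<Longrightarrow> g j s \<noteq> 0"
  shows "\<forall>t\<in>{0..t0}. \<forall>j\<in>J. g j t < 0"
proof (rule ccontr)
  define S where "S = (\<Union>j\<in>J. {t\<in>{0..t0}. 0 \<le> g j t})"
  assume "\<not> ?thesis"
  hence "S \<noteq> {}" unfolding S_def by force
  moreover have "closed S"
    unfolding S_def by (intro closed_UN fin ballI continuous_on_closed_Collect_le cont continuous_intros) auto
  moreover have "bdd_below S" unfolding S_def by (auto intro: bdd_belowI[of _ 0])
  ultimately have "Inf S \<in> S" using closed_contains_Inf by blast
  define s where "s = Inf S"
  obtain j where j: "j \<in> J" and s: "s \<in> {0..t0}" "0 \<le> g j s"
    using \<open>Inf S \<in> S\<close> unfolding s_def S_def by blast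
  have before: "\<forall>t\<in>{0..<s}. \<forall>j\<in>J. g j t < 0"
  proof (intro ballI)
    fix t i assume t: "t \<in> {0..<s}" and i: "i \<in> J"
    have "t \<notin> S" using cInf_lower[OF _ \<open>bdd_below S\<close>, of t] t unfolding s_def by force
    thus "g i t < 0" using t i s unfolding S_def by fastforce
  qed
  have "s \<noteq> 0" using start[OF j] s by auto
  hence "s \<in> closure {0..<s}" using s by simp
  have at_s: "g i s \<le> 0" if i: "i \<in> J" for i
  proof -
    have "{0..<s} \<subseteq> {t\<in>{0..t0}. g i t \<le> 0}" using before i s by fastforce
    moreover have "closed {t\<in>{0..t0}. g i t \<le> 0}"
      by (intro continuous_on_closed_Collect_le cont i continuous_intros)
    ultimately show ?thesis using closure_minimal \<open>s \<in> closure {0..<s}\<close> by blast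
  qed
  have "g j s = 0" using at_s[OF j] s by simp
  moreover have "s \<in> {0<..t0}" using s \<open>s \<noteq> 0\<close> by auto
  ultimately show False using no_zero[OF _ j before] at_s by blast
qed

lemma positive_before_zero_of_negative_derivative:
  fixes g :: "real \<Rightarrow> real"
  assumes "(g has_real_derivative D) (at s within {0..<T})" and "D < 0"
    and "0 < s" "s < T" "g s = 0"
  shows "\<exists>t\<in>{0..<s}. 0 < g t"
proof -
  obtain d where "d > 0" and d: "\<forall>h>0. s - h \<in> {0..<T} \<longrightarrow> h < d \<longrightarrow> g s < g (s - h)"
    using has_real_derivative_neg_dec_left[OF assms(1,2)] by blast
  define h where "h = min d s / 2"
  have "0 < h" "h < d" "s - h \<in> {0..<s}" unfolding h_def using \<open>d > 0\<close> assms(3) by auto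
  thus ?thesis using d assms(4,5) by (intro bexI[of _ "s - h"]) auto
qed

context
  fixes F :: "('i \<Rightarrow> real) \<Rightarrow> 'i \<Rightarrow> real" and b :: "real \<Rightarrow> 'i \<Rightarrow> real"
    and I :: "'i set" and lo hi :: "'i \<Rightarrow> real" and dd T :: real
  assumes fin: "finite I" and dd: "0 < dd"
    and inward: "\<And>x i \<delta>. 0 < \<delta> \<Longrightarrow> \<delta> < dd \<Longrightarrow> i \<in> I \<Longrightarrow>
           \<forall>j\<in>I. lo j - \<delta> \<le> x j \<and> x j \<le> hi j + \<delta> \<Longrightarrow>
           (x i = hi i + \<delta> \<longrightarrow> F x i \<le> 0) \<and> (x i = lo i - \<delta> \<longrightarrow> 0 \<le> F x i)"
    and der: "\<And>t i. t \<in> {0..<T} \<Longrightarrow> i \<in> I \<Longrightarrow>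
           ((\<lambda>s. b s i) has_real_derivative F (b t) i) (at t within {0..<T})"
    and init: "\<And>i. i \<in> I \<Longrightarrow> lo i \<le> b 0 i \<and> b 0 i \<le> hi i"
begin

text \<open>At a first exit time from the box widened at rate \<open>\<epsilon>\<close>, the inward-pointing field and
  the widening make the distance to the exited face strictly decrease.\<close>
lemma widened_box_forward_invariant:
  assumes t0: "t0 \<in> {0..<T}" and \<epsilon>: "0 < \<epsilon>" "\<epsilon> * (1 + t0) < dd" and i0: "i0 \<in> I"
  shows "lo i0 - \<epsilon> * (1 + t0) < b t0 i0 \<and> b t0 i0 < hi i0 + \<epsilon> * (1 + t0)"
proof -
  define g :: "'i \<times> bool \<Rightarrow> real \<Rightarrow> real" where
    "g = (\<lambda>(i, up). if up then (\<lambda>t. b t i - (hi i + \<epsilon> * (1 + t)))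
                              else (\<lambda>t. lo i - \<epsilon> * (1 + t) - b t i))"
  have cont: "continuous_on {0..t0} (\<lambda>s. b s i)" if "i \<in> I" for i
    by (rule continuous_on_subset[OF DERIV_continuous_on[OF der]]) (use that t0 in auto)
  have "\<forall>t\<in>{0..t0}. \<forall>j\<in>I \<times> UNIV. g j t < 0"
  proof (rule negative_until_first_zero)
    show "continuous_on {0..t0} (g j)" if "j \<in> I \<times> UNIV" for j
      using that unfolding g_def by (auto intro!: continuous_intros cont)
    show "g j 0 < 0" if "j \<in> I \<times> UNIV" for j
      using that init \<epsilon> unfolding g_def by fastforce
    fix s and j :: "'i \<times> bool"
    assume s: "s \<in> {0<..t0}" and j: "j \<in> I \<times> UNIV"
      and before: "\<forall>t\<in>{0..<s}. \<forall>j\<in>I \<times> UNIV. g j t < 0"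
      and at_s: "\<forall>j\<in>I \<times> UNIV. g j s \<le> 0"
    obtain i up where j_eq: "j = (i, up)" and i: "i \<in> I" using j by auto
    define \<delta> where "\<delta> = \<epsilon> * (1 + s)"
    have \<delta>: "0 < \<delta>" "\<delta> < dd"
      using \<epsilon> s by (auto simp: \<delta>_def intro: le_less_trans[OF mult_left_mono[of "1 + s" "1 + t0"]])
    have box: "\<forall>l\<in>I. lo l - \<delta> \<le> b s l \<and> b s l \<le> hi l + \<delta>"
    proof
      fix l assume "l \<in> I"
      hence "g (l, True) s \<le> 0" "g (l, False) s \<le> 0" using at_s by auto
      thus "lo l - \<delta> \<le> b s l \<and> b s l \<le> hi l + \<delta>" unfolding g_def \<delta>_def by auto
    qed
    have sT: "s \<in> {0..<T}" using s t0 by auto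
    have D: "(g j has_real_derivative (if up then F (b s) i - \<epsilon> else - F (b s) i - \<epsilon>))
               (at s within {0..<T})"
      unfolding g_def j_eq by (cases up) (auto intro!: derivative_eq_intros der[OF sT i])
    show "g j s \<noteq> 0"
    proof
      assume zero: "g j s = 0"
      have "(if up then F (b s) i - \<epsilon> else - F (b s) i - \<epsilon>) < 0"
        using inward[OF \<delta> i box] zero \<epsilon> unfolding g_def j_eq \<delta>_def by (cases up) auto
      then obtain t where "t \<in> {0..<s}" "0 < g j t"
        using positive_before_zero_of_negative_derivative[OF D] s sT zero by auto
      thus False using before j by (meson less_asym)
    qed
  qed (use fin in auto)
  hence "g (i0, True) t0 < 0" "g (i0, False) t0 < 0" using t0 i0 by auto
  thus ?thesis unfolding g_def by auto
qed

lemma box_forward_invariant: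
  assumes t0: "t0 \<in> {0..<T}" and i0: "i0 \<in> I"
  shows "lo i0 \<le> b t0 i0 \<and> b t0 i0 \<le> hi i0"
proof -
  have t0_nonneg: "0 \<le> t0" using t0 by auto
  have "lo i0 \<le> b t0 i0 + e \<and> b t0 i0 \<le> hi i0 + e" if e: "0 < e" for e
  proof -
    define \<epsilon> where "\<epsilon> = min dd e / (2 * (1 + t0))"
    have "0 < \<epsilon>" and \<epsilon>t0: "\<epsilon> * (1 + t0) = min dd e / 2"
      using e dd t0_nonneg by (auto simp: \<epsilon>_def field_simps)
    moreover have "\<epsilon> * (1 + t0) < dd" "\<epsilon> * (1 + t0) < e" using \<epsilon>t0 dd e by auto
    ultimately show ?thesis using widened_box_forward_invariant[OF t0 _ _ i0, of \<epsilon>] by fastforce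
  qed
  thus ?thesis by (meson field_le_epsilon)
qed

end

section \<open>Global solutions for bounded Lipschitz fields\<close>

lemma has_integral_power_over_fact:
  fixes c t :: real
  assumes "0 \<le> t"
  shows "((\<lambda>s. c * s ^ n / fact n) has_integral c * t ^ Suc n / fact (Suc n)) {0..t}"
proof -
  have "((\<lambda>s. c * s ^ Suc n / fact (Suc n)) has_real_derivative c * s ^ n / fact n) (at s within X)"
    for s X
    by (rule derivative_eq_intros refl | simp add: fact_Suc field_simps del: of_nat_Suc)+
  thus ?thesis
    using fundamental_theorem_of_calculus[OF assms, of "\<lambda>s. c * s ^ Suc n / fact (Suc n)"]
    by (simp add: has_real_derivative_iff_has_vector_derivative)
qed

locale bounded_lipschitz_field =
  fixes F :: "('i \<Rightarrow> real) \<Rightarrow> 'i \<Rightarrow> real" and I :: "'i set" and M L :: real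
  assumes finite_I: "finite I" and M_nonneg: "0 \<le> M" and L_nonneg: "0 \<le> L"
    and bounded: "\<And>x i. i \<in> I \<Longrightarrow> \<bar>F x i\<bar> \<le> M"
    and lipschitz: "\<And>x y i. i \<in> I \<Longrightarrow> \<bar>F x i - F y i\<bar> \<le> L * (\<Sum>j\<in>I. \<bar>x j - y j\<bar>)"
begin

lemma lipschitz_on_field_comp:
  fixes C :: real
  assumes C: "0 \<le> C" and Q: "\<And>j. j \<in> I \<Longrightarrow> C-lipschitz_on X (\<lambda>s. Q s j)" and i: "i \<in> I"
  shows "(L * (real (card I) * C))-lipschitz_on X (\<lambda>s. F (Q s) i)"
proof (rule lipschitz_onI)
  fix s t assume st: "s \<in> X" "t \<in> X"
  have "(\<Sum>j\<in>I. \<bar>Q s j - Q t j\<bar>) \<le> (\<Sum>j\<in>I. C * dist s t)"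
    using Q st by (intro sum_mono) (auto simp: lipschitz_on_def dist_real_def)
  hence "L * (\<Sum>j\<in>I. \<bar>Q s j - Q t j\<bar>) \<le> L * (card I * C) * dist s t"
    using L_nonneg by (simp add: mult_left_mono mult.assoc)
  thus "dist (F (Q s) i) (F (Q t) i) \<le> L * (card I * C) * dist s t"
    using lipschitz[OF i, of "Q s" "Q t"] by (simp add: dist_real_def)
qed (use C L_nonneg in simp)

lemma continuous_on_field_comp:
  fixes a b :: real and Q :: "real \<Rightarrow> 'i \<Rightarrow> real"
  assumes "0 \<le> C" "\<And>j. j \<in> I \<Longrightarrow> C-lipschitz_on {0..} (\<lambda>s. Q s j)" "i \<in> I" "0 \<le> a"
  shows "continuous_on {a..b} (\<lambda>s. F (Q s) i)"
  using lipschitz_on_continuous_on[OF lipschitz_on_field_comp[OF assms(1-3)]]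
  by (rule continuous_on_subset) (use assms(4) in auto)

definition picard :: "('i \<Rightarrow> real) \<Rightarrow> nat \<Rightarrow> real \<Rightarrow> 'i \<Rightarrow> real" where
  "picard x0 n = rec_nat (\<lambda>t. x0)
     (\<lambda>_ P t j. if j \<in> I then x0 j + integral {0..t} (\<lambda>s. F (P s) j) else x0 j) n"

lemma picard_0 [simp]: "picard x0 0 t = x0"
  by (simp add: picard_def)

lemma picard_Suc:
  "picard x0 (Suc n) t j = (if j \<in> I then x0 j + integral {0..t} (\<lambda>s. F (picard x0 n s) j) else x0 j)"
  by (simp add: picard_def)

lemma picard_lipschitz: "j \<in> I \<Longrightarrow> M-lipschitz_on {0..} (\<lambda>s. picard x0 n s j)"
proof (induction n arbitrary: j)
  case 0 show ?case using M_nonneg by (auto intro!: lipschitz_onI)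
next
  case (Suc n)
  have cont: "continuous_on {a..b} (\<lambda>s. F (picard x0 n s) j)" if "0 \<le> a" for a b
    by (rule continuous_on_field_comp[OF M_nonneg Suc.IH Suc.prems that])
  have step: "\<bar>picard x0 (Suc n) t j - picard x0 (Suc n) s j\<bar> \<le> M * (t - s)"
    if "0 \<le> s" "s \<le> t" for s t
  proof -
    have "integral {0..s} (\<lambda>u. F (picard x0 n u) j) + integral {s..t} (\<lambda>u. F (picard x0 n u) j)
          = integral {0..t} (\<lambda>u. F (picard x0 n u) j)"
      using Henstock_Kurzweil_Integration.integral_combine[of 0 s t] that
        integrable_continuous_interval[OF cont[of 0 t]] by simp
    moreover have "norm (integral {s..t} (\<lambda>u. F (picard x0 n u) j)) \<le> M * (t - s)"
      by (rule integral_bound) (use that Suc.prems in \<open>auto intro!: cont bounded\<close>)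
    ultimately show ?thesis using Suc.prems by (auto simp: picard_Suc)
  qed
  show ?case
  proof (rule lipschitz_onI[OF _ M_nonneg])
    fix s t :: real assume "s \<in> {0..}" "t \<in> {0..}"
    thus "dist (picard x0 (Suc n) s j) (picard x0 (Suc n) t j) \<le> M * dist s t"
      using step[of s t] step[of t s] by (cases "s \<le> t") (auto simp: dist_real_def abs_minus_commute)
  qed
qed

lemma continuous_on_field_picard: "i \<in> I \<Longrightarrow> 0 \<le> a \<Longrightarrow> continuous_on {a..b} (\<lambda>s. F (picard x0 n s) i)"
  using continuous_on_field_comp[OF M_nonneg picard_lipschitz] .

definition picard_bound :: "nat \<Rightarrow> real \<Rightarrow> real" where
  "picard_bound n t = M * (card I * L) ^ n * t ^ Suc n / fact (Suc n)"

lemma picard_step_bound: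
  assumes "0 \<le> t" "j \<in> I"
  shows "\<bar>picard x0 (Suc n) t j - picard x0 n t j\<bar> \<le> picard_bound n t"
  using assms
proof (induction n arbitrary: t j)
  case 0
  have "norm (integral {0..t} (\<lambda>s. F x0 j)) \<le> M * (t - 0)"
    by (rule integral_bound) (use 0 in \<open>auto intro!: bounded\<close>)
  thus ?case using 0 by (simp add: picard_Suc picard_bound_def)
next
  case (Suc n)
  define c where "c = card I * L * (M * (card I * L) ^ n)"
  have int: "(\<lambda>s. F (picard x0 m s) j) integrable_on {0..t}" for m
    by (intro integrable_continuous_interval continuous_on_field_picard Suc.prems) simp
  have pointwise: "norm (F (picard x0 (Suc n) s) j - F (picard x0 n s) j) \<le> c * s ^ Suc n / fact (Suc n)"
    if "s \<in> {0..t}" for s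
  proof -
    have "\<bar>F (picard x0 (Suc n) s) j - F (picard x0 n s) j\<bar>
          \<le> L * (\<Sum>i\<in>I. \<bar>picard x0 (Suc n) s i - picard x0 n s i\<bar>)"
      by (rule lipschitz[OF Suc.prems(2)])
    also have "\<dots> \<le> L * (\<Sum>i\<in>I. picard_bound n s)"
      using that Suc.IH by (intro mult_left_mono[OF sum_mono L_nonneg]) auto
    also have "\<dots> = c * s ^ Suc n / fact (Suc n)" by (simp add: c_def picard_bound_def)
    finally show ?thesis by simp
  qed
  have "\<bar>picard x0 (Suc (Suc n)) t j - picard x0 (Suc n) t j\<bar>
        = norm (integral {0..t} (\<lambda>s. F (picard x0 (Suc n) s) j - F (picard x0 n s) j))"
    using Suc.prems int by (simp add: picard_Suc integral_diff)
  also have "\<dots> \<le> integral {0..t} (\<lambda>s. c * s ^ Suc n / fact (Suc n))"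
    using has_integral_integrable[OF has_integral_power_over_fact[OF Suc.prems(1), of c "Suc n"]]
    by (intro integral_norm_bound_integral integrable_diff int pointwise)
  also have "\<dots> = c * t ^ Suc (Suc n) / fact (Suc (Suc n))"
    by (rule integral_unique[OF has_integral_power_over_fact[OF Suc.prems(1)]])
  also have "\<dots> = picard_bound (Suc n) t" by (simp add: c_def picard_bound_def mult_ac)
  finally show ?case .
qed

lemma picard_bound_mono: "0 \<le> s \<Longrightarrow> s \<le> t \<Longrightarrow> picard_bound n s \<le> picard_bound n t"
  unfolding picard_bound_def using M_nonneg L_nonneg
  by (intro divide_right_mono mult_left_mono power_mono) auto

lemma summable_picard_bound:
  assumes t: "0 \<le> t"
  shows "summable (\<lambda>n. picard_bound n t)"
proof (rule summable_comparison_test')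
  show "summable (\<lambda>n. M * t * (inverse (fact n) * (card I * L * t) ^ n))"
    by (intro summable_mult summable_exp)
  fix n
  have "picard_bound n t = M * t * ((card I * L * t) ^ n / fact (Suc n))"
    unfolding picard_bound_def by (simp add: power_mult_distrib mult_ac)
  also have "\<dots> \<le> M * t * ((card I * L * t) ^ n / fact n)"
    using M_nonneg L_nonneg t by (intro mult_left_mono divide_left_mono) (auto simp: fact_mono)
  moreover have "0 \<le> picard_bound n t"
    unfolding picard_bound_def using M_nonneg L_nonneg t by simp
  ultimately show "norm (picard_bound n t) \<le> M * t * (inverse (fact n) * (card I * L * t) ^ n)"
    by (simp add: divide_inverse mult_ac)
qed

lemma picard_bound_tail_tendsto_0:
  assumes "0 \<le> t"
  shows "(\<lambda>n. \<Sum>m. picard_bound (m + n) t) \<longlonglongrightarrow> 0"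
proof -
  note summable = summable_picard_bound[OF assms]
  have "(\<lambda>n. (\<Sum>m. picard_bound m t) - (\<Sum>m<n. picard_bound m t))
          \<longlonglongrightarrow> (\<Sum>m. picard_bound m t) - (\<Sum>m. picard_bound m t)"
    by (intro tendsto_diff tendsto_const summable_LIMSEQ summable)
  thus ?thesis by (simp add: suminf_minus_initial_segment[OF summable])
qed

definition picard_limit :: "('i \<Rightarrow> real) \<Rightarrow> real \<Rightarrow> 'i \<Rightarrow> real" where
  "picard_limit x0 t j = x0 j + (\<Sum>n. picard x0 (Suc n) t j - picard x0 n t j)"

lemma picard_limit_tail_bound:
  assumes s: "0 \<le> s" "s \<le> t" and j: "j \<in> I"
  shows "\<bar>picard_limit x0 s j - picard x0 n s j\<bar> \<le> (\<Sum>m. picard_bound (m + n) t)"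
proof -
  define d where "d m = picard x0 (Suc m) s j - picard x0 m s j" for m
  have t: "0 \<le> t" using s by linarith
  have d_le: "\<bar>d m\<bar> \<le> picard_bound m t" for m
    using picard_step_bound[OF s(1) j, of x0 m] picard_bound_mono[OF s, of m] unfolding d_def
    by linarith
  have summable_bound: "summable (\<lambda>m. picard_bound (m + k) t)" for k
    by (rule summable_ignore_initial_segment[OF summable_picard_bound[OF t]])
  have summable_d: "summable (\<lambda>m. \<bar>d (m + k)\<bar>)" for k
    by (rule summable_comparison_test'[OF summable_bound[of k]]) (simp add: d_le)
  have "picard x0 n s j = x0 j + (\<Sum>m<n. d m)"
    unfolding d_def using sum_lessThan_telescope[of "\<lambda>m. picard x0 m s j" n] by simp
  hence "picard_limit x0 s j - picard x0 n s j = (\<Sum>m. d (m + n))"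
    using suminf_minus_initial_segment[OF summable_rabs_cancel[OF summable_d[of 0]], of n]
    unfolding picard_limit_def d_def by simp
  also have "\<bar>\<dots>\<bar> \<le> (\<Sum>m. \<bar>d (m + n)\<bar>)" by (rule summable_rabs[OF summable_d])
  also have "\<dots> \<le> (\<Sum>m. picard_bound (m + n) t)"
    by (intro suminf_le d_le summable_d summable_bound)
  finally show ?thesis .
qed

lemma picard_tendsto:
  assumes s: "0 \<le> s" and j: "j \<in> I"
  shows "(\<lambda>n. picard x0 n s j) \<longlonglongrightarrow> picard_limit x0 s j"
proof (rule LIM_zero_cancel, rule Lim_null_comparison[OF _ picard_bound_tail_tendsto_0[OF s]])
  show "\<forall>\<^sub>F n in sequentially. norm (picard x0 n s j - picard_limit x0 s j)
          \<le> (\<Sum>m. picard_bound (m + n) s)"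
    using picard_limit_tail_bound[OF s order_refl j] by (simp add: abs_minus_commute)
qed

lemma picard_limit_lipschitz: "j \<in> I \<Longrightarrow> M-lipschitz_on {0..} (\<lambda>s. picard_limit x0 s j)"
proof (rule lipschitz_onI[OF _ M_nonneg])
  fix s t :: real assume j: "j \<in> I" and st: "s \<in> {0..}" "t \<in> {0..}"
  have lim: "(\<lambda>n. dist (picard x0 n s j) (picard x0 n t j))
          \<longlonglongrightarrow> dist (picard_limit x0 s j) (picard_limit x0 t j)"
    using st by (intro tendsto_dist picard_tendsto j) auto
  have "dist (picard x0 n s j) (picard x0 n t j) \<le> M * dist s t" for n
    by (rule lipschitz_onD[OF picard_lipschitz[OF j] st])
  thus "dist (picard_limit x0 s j) (picard_limit x0 t j) \<le> M * dist s t"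
    using LIMSEQ_le_const2[OF lim] by blast
qed

lemma continuous_on_field_picard_limit:
  "i \<in> I \<Longrightarrow> 0 \<le> a \<Longrightarrow> continuous_on {a..b} (\<lambda>s. F (picard_limit x0 s) i)"
  using continuous_on_field_comp[OF M_nonneg picard_limit_lipschitz] .

lemma picard_limit_0: "picard_limit x0 0 j = x0 j"
proof -
  have "picard x0 n 0 = x0" for n by (cases n) (auto simp: picard_Suc)
  thus ?thesis by (simp add: picard_limit_def)
qed

lemma integral_field_picard_tendsto:
  assumes t: "0 \<le> t" and j: "j \<in> I"
  shows "(\<lambda>n. integral {0..t} (\<lambda>s. F (picard x0 n s) j))
           \<longlonglongrightarrow> integral {0..t} (\<lambda>s. F (picard_limit x0 s) j)"
proof (rule LIM_zero_cancel, rule Lim_null_comparison)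
  define tail where "tail n = (\<Sum>m. picard_bound (m + n) t)" for n
  show "(\<lambda>n. L * card I * tail n * (t - 0)) \<longlonglongrightarrow> 0"
    unfolding tail_def by (intro tendsto_mult_left_zero tendsto_mult_right_zero picard_bound_tail_tendsto_0 t)
  have "norm (integral {0..t} (\<lambda>s. F (picard x0 n s) j - F (picard_limit x0 s) j))
        \<le> L * card I * tail n * (t - 0)" for n
  proof (rule integral_bound)
    fix s assume s: "s \<in> {0..t}"
    have "\<bar>F (picard x0 n s) j - F (picard_limit x0 s) j\<bar>
          \<le> L * (\<Sum>i\<in>I. \<bar>picard x0 n s i - picard_limit x0 s i\<bar>)"
      by (rule lipschitz[OF j])
    also have "\<dots> \<le> L * (\<Sum>i\<in>I. tail n)"
      using picard_limit_tail_bound s unfolding tail_def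
      by (intro mult_left_mono[OF sum_mono L_nonneg]) (auto simp: abs_minus_commute)
    finally show "norm (F (picard x0 n s) j - F (picard_limit x0 s) j) \<le> L * card I * tail n"
      by (simp add: mult_ac)
  qed (use t j in \<open>auto intro!: continuous_intros continuous_on_field_picard
                                 continuous_on_field_picard_limit\<close>)
  moreover have "integral {0..t} (\<lambda>s. F (picard x0 n s) j) - integral {0..t} (\<lambda>s. F (picard_limit x0 s) j)
      = integral {0..t} (\<lambda>s. F (picard x0 n s) j - F (picard_limit x0 s) j)" for n
    by (rule integral_diff[symmetric])
       (auto intro!: integrable_continuous_interval continuous_on_field_picard
                     continuous_on_field_picard_limit j)
  ultimately show "\<forall>\<^sub>F n in sequentially. norm (integral {0..t} (\<lambda>s. F (picard x0 n s) j)
          - integral {0..t} (\<lambda>s. F (picard_limit x0 s) j)) \<le> L * card I * tail n * (t - 0)"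
    by simp
qed

lemma picard_limit_integral_eq:
  assumes t: "0 \<le> t" and j: "j \<in> I"
  shows "picard_limit x0 t j = x0 j + integral {0..t} (\<lambda>s. F (picard_limit x0 s) j)"
proof -
  have "(\<lambda>n. picard x0 (Suc n) t j) \<longlonglongrightarrow> x0 j + integral {0..t} (\<lambda>s. F (picard_limit x0 s) j)"
    using tendsto_add[OF tendsto_const integral_field_picard_tendsto[OF t j]] j
    by (simp add: picard_Suc)
  thus ?thesis using LIMSEQ_unique LIMSEQ_Suc[OF picard_tendsto[OF t j]] by blast
qed

lemma picard_limit_has_derivative:
  assumes t: "0 \<le> t" and i: "i \<in> I"
  shows "((\<lambda>s. picard_limit x0 s i) has_real_derivative F (picard_limit x0 t) i) (at t within {0..})"
proof -
  have "((\<lambda>u. integral {0..u} (\<lambda>s. F (picard_limit x0 s) i)) has_real_derivative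
          F (picard_limit x0 t) i) (at t within {0..t + 1})"
    using t by (intro integral_has_real_derivative continuous_on_field_picard_limit i) auto
  hence "((\<lambda>u. x0 i + integral {0..u} (\<lambda>s. F (picard_limit x0 s) i)) has_real_derivative
          F (picard_limit x0 t) i) (at t within {0..t + 1})"
    by (auto intro!: derivative_eq_intros)
  moreover have "at t within {0..t + 1} = at t within {0..}"
    by (rule at_within_nhd[where S="{..<t + 1}"]) auto
  ultimately have "((\<lambda>u. x0 i + integral {0..u} (\<lambda>s. F (picard_limit x0 s) i)) has_real_derivative
          F (picard_limit x0 t) i) (at t within {0..})"
    by simp
  thus ?thesis
    by (rule has_field_derivative_transform_within[where d=1])
       (use t picard_limit_integral_eq[OF _ i] in auto)
qed

end

section \<open>The system\<close>

lemma sigma_nonneg: "i \<le> k \<Longrightarrow> 0 \<le> sigma k i"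
  unfolding sigma_def by simp

lemma sigma_le_square: "i \<le> k \<Longrightarrow> sigma k i \<le> real k * real k"
  unfolding sigma_def by (rule order_trans[of _ "real k * real k / 2"])
    (auto intro!: divide_right_mono mult_mono)

lemma sigma_ge_half: "1 \<le> i \<Longrightarrow> i < k \<Longrightarrow> 1/2 \<le> sigma k i"
proof -
  assume "1 \<le> i" "i < k"
  hence "1 * 1 \<le> real i * (real k - real i)" by (intro mult_mono) auto
  thus ?thesis unfolding sigma_def by simp
qed

lemma sigma_second_difference: "1 \<le> i \<Longrightarrow> 2 * sigma k i - sigma k (i - 1) - sigma k (i + 1) = 1"
  unfolding sigma_def by (simp add: of_nat_diff field_simps)

lemma rhs_points_into_box:
  fixes x :: "nat \<Rightarrow> real"
  assumes \<eta>: "\<eta> \<le> 1/2" and \<delta>: "0 \<le> \<delta>" "\<delta> \<le> \<eta>" and A: "0 \<le> A" and i: "i \<in> {2..k}"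
    and box: "\<forall>j\<in>{2..k}. - sigma k (j - 1) + \<eta> - \<delta> \<le> x j \<and> x j \<le> A + \<delta>"
  shows "(x i = A + \<delta> \<longrightarrow> rhs k x i \<le> 0)
       \<and> (x i = - sigma k (i - 1) + \<eta> - \<delta> \<longrightarrow> 0 \<le> rhs k x i)"
proof (intro conjI impI)
  assume xi: "x i = A + \<delta>"
  have "0 \<le> x i + sigma k (i - 1)" using xi A \<delta> sigma_nonneg[of "i - 1" k] i by auto
  moreover have "bext k x (i - 1) \<le> A + \<delta>" "bext k x (i + 1) \<le> A + \<delta>"
    using box A \<delta> unfolding bext_def by auto
  ultimately show "rhs k x i \<le> 0"
    unfolding rhs_def using xi by (intro mult_nonneg_nonpos) linarith+
next
  assume xi: "x i = - sigma k (i - 1) + \<eta> - \<delta>"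
  have neighbour: "- sigma k (j - 1) \<le> bext k x j" if "j \<le> k + 1" for j
  proof (cases "2 \<le> j \<and> j \<le> k")
    case True
    thus ?thesis using box \<delta> unfolding bext_def by force
  next
    case False
    hence "j - 1 = 0 \<or> j - 1 = k" using that by auto
    thus ?thesis using False unfolding bext_def sigma_def by auto
  qed
  have "2 * sigma k (i - 1) - sigma k (i - 1 - 1) - sigma k i = 1"
    using sigma_second_difference[of "i - 1" k] i by (simp add: Suc_le_eq)
  moreover have "- sigma k (i - 1 - 1) \<le> bext k x (i - 1)" "- sigma k i \<le> bext k x (i + 1)"
    using neighbour[of "i - 1"] neighbour[of "i + 1"] i by auto
  ultimately have "0 \<le> bext k x (i - 1) - 2 * x i + bext k x (i + 1)"
    using xi \<eta> \<delta> by linarith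
  moreover have "0 \<le> x i + sigma k (i - 1)" using xi \<delta> by simp
  ultimately show "0 \<le> rhs k x i" unfolding rhs_def by simp
qed

lemma rhs_cong: "\<forall>j\<in>{2..k}. y j = y' j \<Longrightarrow> i \<in> {2..k} \<Longrightarrow> rhs k y i = rhs k y' i"
  unfolding rhs_def bext_def by auto

lemma abs_bext_le: "\<forall>j\<in>{2..k}. \<bar>y j\<bar> \<le> S \<Longrightarrow> 0 \<le> S \<Longrightarrow> \<bar>bext k y j\<bar> \<le> S"
  unfolding bext_def by auto

lemma abs_bext_diff_le: "\<bar>bext k y j - bext k y' j\<bar> \<le> (\<Sum>m\<in>{2..k}. \<bar>y m - y' m\<bar>)"
  unfolding bext_def
  by (auto intro: sum_nonneg member_le_sum[of j "{2..k}" "\<lambda>m. \<bar>y m - y' m\<bar>", simplified])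

lemma abs_rhs_factors_le:
  assumes box: "\<forall>j\<in>{2..k}. \<bar>y j\<bar> \<le> S" and S: "real k * real k \<le> S" and i: "i \<in> {2..k}"
  shows "\<bar>y i + sigma k (i - 1)\<bar> \<le> 2 * S"
    and "\<bar>bext k y (i - 1) - 2 * y i + bext k y (i + 1)\<bar> \<le> 4 * S"
proof -
  have S0: "0 \<le> S" using S zero_le_square[of "real k"] by linarith
  have yi: "\<bar>y i\<bar> \<le> S" and "0 \<le> sigma k (i - 1)" "sigma k (i - 1) \<le> real k * real k"
    using box i sigma_nonneg[of "i - 1" k] sigma_le_square[of "i - 1" k] by auto
  thus "\<bar>y i + sigma k (i - 1)\<bar> \<le> 2 * S" using S S0 by linarith
  show "\<bar>bext k y (i - 1) - 2 * y i + bext k y (i + 1)\<bar> \<le> 4 * S"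
    using abs_bext_le[OF box S0, of "i - 1"] abs_bext_le[OF box S0, of "i + 1"] yi by linarith
qed

lemma abs_rhs_le:
  assumes "\<forall>j\<in>{2..k}. \<bar>y j\<bar> \<le> S" "real k * real k \<le> S" "i \<in> {2..k}"
  shows "\<bar>rhs k y i\<bar> \<le> (2 * S) * (4 * S)"
  unfolding rhs_def abs_mult using abs_rhs_factors_le[OF assms] by (intro mult_mono) auto

lemma abs_rhs_diff_le:
  assumes box: "\<forall>j\<in>{2..k}. \<bar>y j\<bar> \<le> S" "\<forall>j\<in>{2..k}. \<bar>y' j\<bar> \<le> S"
    and S: "real k * real k \<le> S" and i: "i \<in> {2..k}"
  shows "\<bar>rhs k y i - rhs k y' i\<bar> \<le> (12 * S) * (\<Sum>m\<in>{2..k}. \<bar>y m - y' m\<bar>)"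
proof -
  define \<Sigma> where "\<Sigma> = (\<Sum>m\<in>{2..k}. \<bar>y m - y' m\<bar>)"
  define a where "a = y i + sigma k (i - 1)"
  define a' where "a' = y' i + sigma k (i - 1)"
  define p where "p = bext k y (i - 1) - 2 * y i + bext k y (i + 1)"
  define p' where "p' = bext k y' (i - 1) - 2 * y' i + bext k y' (i + 1)"
  have yi: "\<bar>y i - y' i\<bar> \<le> \<Sigma>" unfolding \<Sigma>_def using i by (intro member_le_sum) auto
  have hp: "\<bar>p - p'\<bar> \<le> 4 * \<Sigma>"
    using abs_bext_diff_le[of k y "i - 1" y'] abs_bext_diff_le[of k y "i + 1" y'] yi
    unfolding p_def p'_def \<Sigma>_def by linarith
  have ha: "\<bar>a - a'\<bar> \<le> \<Sigma>" unfolding a_def a'_def using yi by simp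
  have "rhs k y i - rhs k y' i = a * (p - p') + p' * (a - a')"
    unfolding rhs_def a_def a'_def p_def p'_def by (simp add: algebra_simps)
  also have "\<bar>\<dots>\<bar> \<le> \<bar>a\<bar> * \<bar>p - p'\<bar> + \<bar>p'\<bar> * \<bar>a - a'\<bar>"
    unfolding abs_mult[symmetric] by (rule abs_triangle_ineq)
  also have "\<dots> \<le> (2 * S) * (4 * \<Sigma>) + (4 * S) * \<Sigma>"
  proof -
    have "\<bar>a\<bar> \<le> 2 * S" "\<bar>p'\<bar> \<le> 4 * S"
      using abs_rhs_factors_le[OF box(1) S i] abs_rhs_factors_le[OF box(2) S i]
      unfolding a_def p'_def by simp_all
    moreover have "0 \<le> S" using S zero_le_square[of "real k"] by linarith
    ultimately show ?thesis using hp ha by (intro add_mono mult_mono) simp_all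
  qed
  also have "\<dots> = (12 * S) * \<Sigma>" by (simp add: algebra_simps)
  finally show ?thesis unfolding \<Sigma>_def .
qed

definition clamp_box :: "nat \<Rightarrow> real \<Rightarrow> real \<Rightarrow> (nat \<Rightarrow> real) \<Rightarrow> nat \<Rightarrow> real" where
  "clamp_box k \<eta> A x j = (if j \<in> {2..k} then max (- sigma k (j - 1) + \<eta>) (min A (x j)) else x j)"

lemma clamp_box_bounds:
  assumes "\<eta> \<le> 1/2" "0 \<le> A" "j \<in> {2..k}"
  shows "- sigma k (j - 1) + \<eta> \<le> clamp_box k \<eta> A x j \<and> clamp_box k \<eta> A x j \<le> A"
proof -
  have "1/2 \<le> sigma k (j - 1)" using sigma_ge_half[of "j - 1" k] assms(3) by auto
  thus ?thesis using assms unfolding clamp_box_def by auto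
qed

lemma abs_clamp_box_diff_le: "\<bar>clamp_box k \<eta> A x j - clamp_box k \<eta> A y j\<bar> \<le> \<bar>x j - y j\<bar>"
  unfolding clamp_box_def by (auto simp: max_def min_def)

lemma rhs_clamp_box_eq: "inK k \<eta> A x \<Longrightarrow> i \<in> {2..k} \<Longrightarrow> rhs k (clamp_box k \<eta> A x) i = rhs k x i"
  unfolding inK_def by (intro rhs_cong) (auto simp: clamp_box_def)

lemma clamped_rhs_bounded_lipschitz:
  assumes "0 < \<eta>" "\<eta> \<le> 1/2" "0 \<le> A" and S_ge: "A + real k * real k \<le> S"
  shows "bounded_lipschitz_field (\<lambda>x. rhs k (clamp_box k \<eta> A x)) {2..k} ((2 * S) * (4 * S)) (12 * S)"
proof -
  have S: "real k * real k \<le> S" "0 \<le> S" using assms(3) S_ge zero_le_square[of "real k"] by linarith+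
  have clamp_le: "\<forall>j\<in>{2..k}. \<bar>clamp_box k \<eta> A x j\<bar> \<le> S" for x
  proof
    fix j assume j: "j \<in> {2..k}"
    have "sigma k (j - 1) \<le> real k * real k" using sigma_le_square[of "j - 1" k] j by auto
    moreover have "- sigma k (j - 1) + \<eta> \<le> clamp_box k \<eta> A x j" "clamp_box k \<eta> A x j \<le> A"
      using clamp_box_bounds[OF assms(2,3) j, of x] by auto
    ultimately show "\<bar>clamp_box k \<eta> A x j\<bar> \<le> S"
      using assms(1,3) S_ge zero_le_square[of "real k"] unfolding abs_le_iff by (intro conjI) linarith+
  qed
  show ?thesis
  proof
    show "\<bar>rhs k (clamp_box k \<eta> A x) i\<bar> \<le> (2 * S) * (4 * S)" if "i \<in> {2..k}" for x i
      by (rule abs_rhs_le[OF clamp_le S(1) that])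
    show "\<bar>rhs k (clamp_box k \<eta> A x) i - rhs k (clamp_box k \<eta> A y) i\<bar>
          \<le> (12 * S) * (\<Sum>j\<in>{2..k}. \<bar>x j - y j\<bar>)" if "i \<in> {2..k}" for x y i
    proof -
      have "(\<Sum>j\<in>{2..k}. \<bar>clamp_box k \<eta> A x j - clamp_box k \<eta> A y j\<bar>) \<le> (\<Sum>j\<in>{2..k}. \<bar>x j - y j\<bar>)"
        by (intro sum_mono abs_clamp_box_diff_le)
      hence "(12 * S) * (\<Sum>j\<in>{2..k}. \<bar>clamp_box k \<eta> A x j - clamp_box k \<eta> A y j\<bar>)
             \<le> (12 * S) * (\<Sum>j\<in>{2..k}. \<bar>x j - y j\<bar>)"
        using S(2) by (intro mult_left_mono) auto
      thus ?thesis using abs_rhs_diff_le[OF clamp_le[of x] clamp_le[of y] S(1) that] by linarith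
    qed
  qed (use S in auto)
qed

lemma clamped_rhs_points_into_box:
  assumes \<eta>: "0 < \<eta>" "\<eta> \<le> 1/2" and A: "0 \<le> A" and \<delta>: "0 < \<delta>" and j: "j \<in> {2..k}"
  shows "(x j = A + \<delta> \<longrightarrow> rhs k (clamp_box k \<eta> A x) j \<le> 0)
       \<and> (x j = - sigma k (j - 1) + \<eta> - \<delta> \<longrightarrow> 0 \<le> rhs k (clamp_box k \<eta> A x) j)"
proof -
  have "\<forall>l\<in>{2..k}. - sigma k (l - 1) + \<eta> - 0 \<le> clamp_box k \<eta> A x l \<and> clamp_box k \<eta> A x l \<le> A + 0"
    using clamp_box_bounds[OF \<eta>(2) A] by simp
  note into_box = rhs_points_into_box[OF \<eta>(2) order_refl less_imp_le[OF \<eta>(1)] A j this]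
  have "x j = A + \<delta> \<Longrightarrow> clamp_box k \<eta> A x j = A + 0"
    "x j = - sigma k (j - 1) + \<eta> - \<delta> \<Longrightarrow> clamp_box k \<eta> A x j = - sigma k (j - 1) + \<eta> - 0"
    using clamp_box_bounds[OF \<eta>(2) A j, of x] \<delta> j unfolding clamp_box_def by auto
  thus ?thesis using into_box by auto
qed

lemma inK_forward_invariant:
  assumes \<eta>: "0 < \<eta>" "\<eta> \<le> 1/2" and A: "0 \<le> A"
    and sol: "is_solution k {0..<T} b" and init: "inK k \<eta> A (b 0)" and t: "t \<in> {0..<T}"
  shows "inK k \<eta> A (b t)"
  unfolding inK_def
proof
  fix i assume i: "i \<in> {2..k}"
  show "- sigma k (i - 1) + \<eta> \<le> b t i \<and> b t i \<le> A"
  proof (rule box_forward_invariant[where F="rhs k" and dd=\<eta> and T=T and b=b and I="{2..k}"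
                                 and lo="\<lambda>j. - sigma k (j - 1) + \<eta>" and hi="\<lambda>_. A"])
    show "(x j = A + \<delta> \<longrightarrow> rhs k x j \<le> 0) \<and> (x j = - sigma k (j - 1) + \<eta> - \<delta> \<longrightarrow> 0 \<le> rhs k x j)"
      if "0 < \<delta>" "\<delta> < \<eta>" "j \<in> {2..k}" "\<forall>l\<in>{2..k}. - sigma k (l - 1) + \<eta> - \<delta> \<le> x l \<and> x l \<le> A + \<delta>"
      for x j \<delta>
      using rhs_points_into_box[OF \<eta>(2) _ _ A that(3,4)] that(1,2) by simp
  qed (use \<eta> sol init t i in \<open>auto simp: is_solution_def inK_def\<close>)
qed

lemma exists_global_solution_from_inK:
  assumes \<eta>: "0 < \<eta>" "\<eta> \<le> 1/2" and A: "0 \<le> A" and x0: "inK k \<eta> A x0"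
  shows "\<exists>b. b 0 = x0 \<and> is_solution k {0..} b"
proof -
  define G where "G x = rhs k (clamp_box k \<eta> A x)" for x
  define S where "S = A + real k * real k"
  interpret G: bounded_lipschitz_field G "{2..k}" "(2 * S) * (4 * S)" "12 * S"
    unfolding G_def by (rule clamped_rhs_bounded_lipschitz[OF assms(1-3)]) (simp add: S_def)
  define b where "b = G.picard_limit x0"
  have b0: "b 0 = x0" by (simp add: b_def fun_eq_iff G.picard_limit_0)
  have inv: "inK k \<eta> A (b t)" if t: "0 \<le> t" for t
    unfolding inK_def
  proof
    fix i assume i: "i \<in> {2..k}"
    show "- sigma k (i - 1) + \<eta> \<le> b t i \<and> b t i \<le> A"
    proof (rule box_forward_invariant[where F=G and dd=1 and T="t + 1" and b=b and I="{2..k}"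
                                     and lo="\<lambda>j. - sigma k (j - 1) + \<eta>" and hi="\<lambda>_. A"])
      show "((\<lambda>s. b s j) has_real_derivative G (b u) j) (at u within {0..<t + 1})"
        if "u \<in> {0..<t + 1}" "j \<in> {2..k}" for u j
        using G.picard_limit_has_derivative[of u j x0] that unfolding b_def
        by (auto intro: has_field_derivative_subset)
    qed (use clamped_rhs_points_into_box[OF assms(1-3)] x0 b0 t i in \<open>auto simp: G_def inK_def\<close>)
  qed
  have "is_solution k {0..} b"
    unfolding is_solution_def
  proof (intro ballI)
    fix t i assume t: "t \<in> {0::real..}" and i: "i \<in> {2..k}"
    have "G (b t) i = rhs k (b t) i" using rhs_clamp_box_eq[OF inv i] t unfolding G_def by auto
    thus "((\<lambda>s. b s i) has_real_derivative rhs k (b t) i) (at t within {0..})"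
      using G.picard_limit_has_derivative[of t i x0] t i unfolding b_def by auto
  qed
  with b0 show ?thesis by blast
qed

theorem proposition2p3:
  fixes k :: nat and \<eta> A :: real
  assumes "k \<ge> 2" and "0 < \<eta>" and "\<eta> \<le> 1/5" and "A \<ge> 0"
  shows "(\<forall>T b. 0 < T \<and> is_solution k {0..<T} b \<and> inK k \<eta> A (b 0)
            \<longrightarrow> (\<forall>t\<in>{0..<T}. inK k \<eta> A (b t)))
       \<and> (\<forall>x0. inK k \<eta> A x0 \<longrightarrow>
            (\<exists>b. (\<forall>i\<in>{2..k}. b 0 i = x0 i) \<and> is_solution k {0..} b))"
proof -
  have \<eta>: "0 < \<eta>" "\<eta> \<le> 1/2" using assms(2,3) by simp_all
  show ?thesis
    using inK_forward_invariant[OF \<eta> assms(4)] exists_global_solution_from_inK[OF \<eta> assms(4)]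
    by fastforce
qed

end
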